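(* In the segregation process, suppose that $F$ is an $x$-firewall incubator (in the initial configuration) and there exist a left-pseudo-transcript and a right-pseudo-transcript of $F$ all of whose partial sums are non-negative. Then $F$ becomes an $x$-firewall, i.e. at some time every node of $F$ is occupied by an individual of type $x$.
   Context: Segregation process: the nodes of an $n$-cycle are indexed mod $n$; at every time there is a bijection between $n$ individuals and the nodes, each individual having type $x$ or $o$; initially each node independently gets label $x$ or $o$ with probability $1/2$. With sign $+1$ for $x$ and $-1$ for $o$, the $x$-bias $\beta_t(i)$ of node $i$ at time $t$ is the sum of the signs of the labels of nodes $i-w,\dots,i+w$. An $x$-individual at $i$ is happy iff $\beta_t(i)>0$, an $o$-individual iff $\beta_t(i)<0$; otherwise unhappy. At each time step two individuals are chosen uniformly at random (a proposed swap); if both are unhappy and of opposite types they exchange nodes, otherwise nothing changes. A block is a sequence of consecutive nodes; a firewall is a block of at least $w+1$ consecutive nodes with identical labels. An $x$-firewall incubator is a block $F$ made up of consecutive blocks $D_L,I,D_R$ (left to right) such that $|D_L|=|D_R|=w+1$, $\beta_0(i)>\sqrt w$ for all $i\in F$, the minimum of $\beta_0$ over $D_L$ is attained at its left endpoint and the minimum of $\beta_0$ over $D_R$ is attained at its right endpoint. $A_L$, $A_R$ denote the blocks of $w$ nodes immediately to the left and right of $F$. The satisfaction time of an individual is the first time at which it is selected for a proposed swap together with an unhappy individual of the opposite type ($\infty$ if none); an individual is impatient at time $t$ if it is unhappy at time $t$ and $t$ is at most its satisfaction time. A left attacking $x$ is an $x$-individual in $A_L$ at time $0$; a left defending $o$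 is an $o$-individual in $D_L$ at time $0$; these are the left combatants (right combatants defined analogously with $A_R,D_R$). The left-transcript is the sign sequence obtained by listing the left combatants in reverse (decreasing) order of satisfaction time and writing $+1$ for each attacking $x$ and $-1$ for each defending $o$; the right-transcript is defined analogously. If there exists a time $t_0$ at which no individual in $F$ is impatient, any sign sequence obtained from the left- (resp. right-) transcript by permuting the signs associated to individuals whose satisfaction time is after $t_0$, while fixing all other signs, is a left- (resp. right-) pseudo-transcript. The $k$-th partial sum of a sequence is the sum of its first $k$ elements. *)

theory Defs
  imports Complex_Main "HOL-Library.Extended_Nat" "HOL-Library.Multiset"
begin

text \<open>Segregation process on the n-cycle with nodes 0..n-1 (indices mod n) and
  neighbourhood radius w.  Individuals are 0..n-1; individual a has type
  ty a (True = x, False = o).  At time 0 individual a sits at node a (so the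
  initial label of node i is ty i).  A configuration is an occupant function
  oc : node => individual.  P t = (a,b) is the pair of individuals proposed
  for a swap at step t; the configuration at time t+1 results from it.\<close>

definition sgnb :: "bool \<Rightarrow> int" where
  "sgnb b = (if b then 1 else -1)"

definition nd :: "nat \<Rightarrow> nat \<Rightarrow> int \<Rightarrow> nat" where
  "nd n s k = nat ((int s + k) mod int n)"

definition bias_of :: "nat \<Rightarrow> nat \<Rightarrow> (nat \<Rightarrow> bool) \<Rightarrow> (nat \<Rightarrow> nat) \<Rightarrow> nat \<Rightarrow> int" where
  "bias_of n w ty oc i = (\<Sum>j\<in>{- int w..int w}. sgnb (ty (oc (nd n i j))))"

definition unhappy_node_of :: "nat \<Rightarrow> nat \<Rightarrow> (nat \<Rightarrow> bool) \<Rightarrow> (nat \<Rightarrow> nat) \<Rightarrow> nat \<Rightarrow> bool" where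
  "unhappy_node_of n w ty oc v =
     (if ty (oc v) then bias_of n w ty oc v \<le> 0 else bias_of n w ty oc v \<ge> 0)"

definition unhappy_ind_of :: "nat \<Rightarrow> nat \<Rightarrow> (nat \<Rightarrow> bool) \<Rightarrow> (nat \<Rightarrow> nat) \<Rightarrow> nat \<Rightarrow> bool" where
  "unhappy_ind_of n w ty oc a = (\<exists>v<n. oc v = a \<and> unhappy_node_of n w ty oc v)"

definition step :: "nat \<Rightarrow> nat \<Rightarrow> (nat \<Rightarrow> bool) \<Rightarrow> (nat \<Rightarrow> nat) \<Rightarrow> nat \<times> nat \<Rightarrow> (nat \<Rightarrow> nat)" where
  "step n w ty oc p =
     (let a = fst p; b = snd p in
      if unhappy_ind_of n w ty oc a \<and> unhappy_ind_of n w ty oc b \<and> ty a \<noteq> ty b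
      then (\<lambda>v. if oc v = a then b else if oc v = b then a else oc v)
      else oc)"

primrec occ :: "nat \<Rightarrow> nat \<Rightarrow> (nat \<Rightarrow> bool) \<Rightarrow> (nat \<Rightarrow> nat \<times> nat) \<Rightarrow> nat \<Rightarrow> (nat \<Rightarrow> nat)" where
  "occ n w ty P 0 = (\<lambda>v. v)"
| "occ n w ty P (Suc t) = step n w ty (occ n w ty P t) (P t)"

definition lab :: "nat \<Rightarrow> nat \<Rightarrow> (nat \<Rightarrow> bool) \<Rightarrow> (nat \<Rightarrow> nat \<times> nat) \<Rightarrow> nat \<Rightarrow> nat \<Rightarrow> bool" where
  "lab n w ty P t v = ty (occ n w ty P t v)"

definition bias :: "nat \<Rightarrow> nat \<Rightarrow> (nat \<Rightarrow> bool) \<Rightarrow> (nat \<Rightarrow> nat \<times> nat) \<Rightarrow> nat \<Rightarrow> nat \<Rightarrow> int" where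
  "bias n w ty P t i = bias_of n w ty (occ n w ty P t) i"

definition unhappy :: "nat \<Rightarrow> nat \<Rightarrow> (nat \<Rightarrow> bool) \<Rightarrow> (nat \<Rightarrow> nat \<times> nat) \<Rightarrow> nat \<Rightarrow> nat \<Rightarrow> bool" where
  "unhappy n w ty P t a = unhappy_ind_of n w ty (occ n w ty P t) a"

definition satisfied_at :: "nat \<Rightarrow> nat \<Rightarrow> (nat \<Rightarrow> bool) \<Rightarrow> (nat \<Rightarrow> nat \<times> nat) \<Rightarrow> nat \<Rightarrow> nat \<Rightarrow> bool" where
  "satisfied_at n w ty P t a =
     (\<exists>b. (P t = (a, b) \<or> P t = (b, a)) \<and> unhappy n w ty P t b \<and> ty b \<noteq> ty a)"

definition sat_time :: "nat \<Rightarrow> nat \<Rightarrow> (nat \<Rightarrow> bool) \<Rightarrow> (nat \<Rightarrow> nat \<times> nat) \<Rightarrow> nat \<Rightarrow> enat" where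
  "sat_time n w ty P a =
     (if \<exists>t. satisfied_at n w ty P t a
      then enat (LEAST t. satisfied_at n w ty P t a) else \<infinity>)"

definition impatient :: "nat \<Rightarrow> nat \<Rightarrow> (nat \<Rightarrow> bool) \<Rightarrow> (nat \<Rightarrow> nat \<times> nat) \<Rightarrow> nat \<Rightarrow> nat \<Rightarrow> bool" where
  "impatient n w ty P t a = (unhappy n w ty P t a \<and> enat t \<le> sat_time n w ty P a)"

text \<open>The block F consists of the m nodes at offsets 0..m-1 from node s.
  D_L = offsets 0..w, D_R = offsets m-w-1..m-1, A_L = offsets -w..-1,
  A_R = offsets m..m+w-1.\<close>
definition x_firewall_incubator :: "nat \<Rightarrow> nat \<Rightarrow> (nat \<Rightarrow> bool) \<Rightarrow> (nat \<Rightarrow> nat \<times> nat) \<Rightarrow> nat \<Rightarrow> nat \<Rightarrow> bool" where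
  "x_firewall_incubator n w ty P s m =
     (2 * (w + 1) \<le> m \<and>
      (\<forall>k\<in>{0..<int m}. real_of_int (bias n w ty P 0 (nd n s k)) > sqrt (real w)) \<and>
      (\<forall>k\<in>{0..int w}. bias n w ty P 0 (nd n s 0) \<le> bias n w ty P 0 (nd n s k)) \<and>
      (\<forall>k\<in>{int m - int w - 1..int m - 1}.
          bias n w ty P 0 (nd n s (int m - 1)) \<le> bias n w ty P 0 (nd n s k)))"

text \<open>Combatants (individuals, identified with their initial nodes):
  left attacking x's (x-individuals in A_L at time 0) and left defending o's
  (o-individuals in D_L at time 0); similarly on the right.\<close>
definition left_combatants :: "nat \<Rightarrow> nat \<Rightarrow> (nat \<Rightarrow> bool) \<Rightarrow> nat \<Rightarrow> nat \<Rightarrow> nat set" where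
  "left_combatants n w ty s m =
     {a. (\<exists>k\<in>{- int w..-1}. a = nd n s k) \<and> ty a} \<union>
     {a. (\<exists>k\<in>{0..int w}. a = nd n s k) \<and> \<not> ty a}"

definition right_combatants :: "nat \<Rightarrow> nat \<Rightarrow> (nat \<Rightarrow> bool) \<Rightarrow> nat \<Rightarrow> nat \<Rightarrow> nat set" where
  "right_combatants n w ty s m =
     {a. (\<exists>k\<in>{int m..int m + int w - 1}. a = nd n s k) \<and> ty a} \<union>
     {a. (\<exists>k\<in>{int m - int w - 1..int m - 1}. a = nd n s k) \<and> \<not> ty a}"

definition calm_time :: "nat \<Rightarrow> nat \<Rightarrow> (nat \<Rightarrow> bool) \<Rightarrow> (nat \<Rightarrow> nat \<times> nat) \<Rightarrow> nat \<Rightarrow> nat \<Rightarrow> nat \<Rightarrow> bool" where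
  "calm_time n w ty P s m t0 =
     (\<forall>k\<in>{0..<int m}. \<not> impatient n w ty P t0 (occ n w ty P t0 (nd n s k)))"

text \<open>Pseudo-transcript of a set C of combatants: cs lists C in reverse
  (non-increasing) order of satisfaction time; the sign sequence sg agrees with the
  signs of cs at every position whose satisfaction time is at most t0, and the signs at
  the remaining positions are permuted (equivalently: same multiset overall).\<close>
definition pseudo_transcript :: "nat \<Rightarrow> nat \<Rightarrow> (nat \<Rightarrow> bool) \<Rightarrow> (nat \<Rightarrow> nat \<times> nat) \<Rightarrow> nat \<Rightarrow> nat \<Rightarrow> nat set \<Rightarrow> int list \<Rightarrow> bool" where
  "pseudo_transcript n w ty P s m C sg =
     (\<exists>t0 cs. calm_time n w ty P s m t0 \<and>
        distinct cs \<and> set cs = C \<and>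
        sorted_wrt (\<lambda>a b. sat_time n w ty P b \<le> sat_time n w ty P a) cs \<and>
        length sg = length cs \<and>
        mset sg = mset (map (\<lambda>a. sgnb (ty a)) cs) \<and>
        (\<forall>i<length cs. sat_time n w ty P (cs ! i) \<le> enat t0 \<longrightarrow> sg ! i = sgnb (ty (cs ! i))))"

definition partial_sums_nonneg :: "int list \<Rightarrow> bool" where
  "partial_sums_nonneg sg = (\<forall>k\<le>length sg. sum_list (take k sg) \<ge> 0)"

end

theory Submission
  imports Defs
begin

text \<open>While every node of F has positive bias, the x's in F are happy and never leave, and an
  o of F leaves only by being swapped for an x; so, as long as this lasts, labels in F only change
  from o to x, and every o of F still holds its original, unsatisfied individual.  A window lying
  inside F therefore keeps at least its initial, positive, bias.  A window near an end of F also
  meets the attacking x's outside F: each satisfied attacking x may cost 2, each satisfied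
  defending o gains 2.  The non-negative partial sums of the pseudo-transcript say that, up to
  the calm time t0, the signed count of satisfied combatants never exceeds that of all combatants,
  and since the initial bias is minimal at the end node of F this keeps every bias in F at least 1
  up to t0.  At t0 an o left in F would be unhappy and not yet satisfied, i.e. impatient, which
  the choice of t0 excludes.\<close>

lemma nd_less: "0 < n \<Longrightarrow> nd n s k < n"
  unfolding nd_def by (simp add: nat_less_iff)

lemma nd_nd: "0 < n \<Longrightarrow> nd n (nd n s k) j = nd n s (k + j)"
  unfolding nd_def by (simp add: mod_add_left_eq add.assoc)

lemma inj_on_nd:
  assumes "0 < n" "hi - lo < int n"
  shows "inj_on (nd n s) {lo..hi}"
proof
  fix x y assume x: "x \<in> {lo..hi}" and y: "y \<in> {lo..hi}" and "nd n s x = nd n s y"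
  then have "(int s + x) mod int n = (int s + y) mod int n"
    using assms(1) unfolding nd_def by (simp add: eq_nat_nat_iff)
  then have "int n dvd x - y"
    by (metis mod_eq_dvd_iff add_diff_cancel_left)
  moreover have "\<bar>x - y\<bar> < int n" using x y assms(2) by auto
  ultimately show "x = y"
    using dvd_imp_le_int[of "x - y" "int n"] by fastforce
qed

lemma sum_list_drop_le_of_prefix_sums_nonneg:
  fixes xs sg :: "int list"
  assumes "mset sg = mset xs" "drop p sg = drop p xs"
    and "\<forall>k\<le>length sg. 0 \<le> sum_list (take k sg)"
  shows "sum_list (drop p xs) \<le> sum_list xs"
proof -
  have "0 \<le> sum_list (take p sg)"
    using assms(3) by (cases "p \<le> length sg") auto
  moreover have "sum_list xs = sum_list (take p sg) + sum_list (drop p sg)"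
    by (metis assms(1) append_take_drop_id sum_list_append sum_mset_sum_list)
  ultimately show ?thesis using assms(2) by simp
qed

lemma filter_less_eq_dropWhile_if_sorted_desc:
  fixes st :: "'a \<Rightarrow> 'b::preorder"
  assumes "sorted_wrt (\<lambda>a b. st b \<le> st a) cs"
  shows "filter (\<lambda>a. st a < u) cs = dropWhile (\<lambda>a. \<not> st a < u) cs"
  using assms
proof (induction cs)
  case (Cons a cs)
  show ?case
  proof (cases "st a < u")
    case True
    then have "\<forall>b\<in>set cs. st b < u" using Cons.prems by (auto intro: le_less_trans)
    with True show ?thesis by simp
  qed (use Cons in simp)
qed simp

text \<open>The elements with key below u form a suffix of cs, on which sg agrees with map c cs;
  the complementary prefix of sg has non-negative sum.\<close>
lemma sum_early_le_sum_if_prefix_sums_nonneg: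
  fixes st :: "'a \<Rightarrow> 'b::linorder" and c :: "'a \<Rightarrow> int"
  assumes "distinct cs" and sorted: "sorted_wrt (\<lambda>a b. st b \<le> st a) cs"
    and "mset sg = mset (map c cs)"
    and agree: "\<forall>i<length cs. st (cs ! i) \<le> u0 \<longrightarrow> sg ! i = c (cs ! i)"
    and "\<forall>k\<le>length sg. 0 \<le> sum_list (take k sg)" and "u \<le> u0"
  shows "(\<Sum>a\<in>{a\<in>set cs. st a < u}. c a) \<le> (\<Sum>a\<in>set cs. c a)"
proof -
  define p where "p = length (takeWhile (\<lambda>a. \<not> st a < u) cs)"
  have suffix: "filter (\<lambda>a. st a < u) cs = drop p cs"
    unfolding p_def filter_less_eq_dropWhile_if_sorted_desc[OF sorted] by (rule dropWhile_eq_drop)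
  have len: "length sg = length cs" using assms(3) by (metis length_map mset_eq_length)
  have "drop p sg = drop p (map c cs)"
  proof (rule nth_equalityI)
    fix i assume "i < length (drop p sg)"
    then have i: "p + i < length cs" using len by simp
    then have "drop p cs ! i \<in> set (filter (\<lambda>a. st a < u) cs)"
      unfolding suffix by (intro nth_mem) simp
    then have "st (cs ! (p + i)) \<le> u0" using \<open>u \<le> u0\<close> i by auto
    then show "drop p sg ! i = drop p (map c cs) ! i" using agree i len by simp
  qed (simp add: len)
  then have "sum_list (drop p (map c cs)) \<le> sum_list (map c cs)"
    using sum_list_drop_le_of_prefix_sums_nonneg assms(3,5) by blast
  moreover have "{a\<in>set cs. st a < u} = set (drop p cs)" "distinct (drop p cs)"
    using suffix[symmetric] \<open>distinct cs\<close> by auto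
  ultimately show ?thesis using \<open>distinct cs\<close> by (simp add: sum_list_distinct_conv_sum_set drop_map)
qed

definition combatants :: "(int \<Rightarrow> nat) \<Rightarrow> (nat \<Rightarrow> bool) \<Rightarrow> int set \<Rightarrow> int set \<Rightarrow> nat set" where
  "combatants N ty A D = N ` {k\<in>A. ty (N k)} \<union> N ` {k\<in>D. \<not> ty (N k)}"

definition combatant_sign :: "(int \<Rightarrow> nat) \<Rightarrow> (nat \<Rightarrow> bool) \<Rightarrow> int set \<Rightarrow> int set \<Rightarrow> int \<Rightarrow> int" where
  "combatant_sign N ty A D j = of_bool (j \<in> A \<and> ty (N j)) - of_bool (j \<in> D \<and> \<not> ty (N j))"

lemma left_combatants_eq:
  "left_combatants n w ty s m = combatants (nd n s) ty {- int w..-1} {0..int w}"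
  unfolding left_combatants_def combatants_def by blast

lemma right_combatants_eq:
  "right_combatants n w ty s m =
     combatants (nd n s) ty {int m..int m + int w - 1} {int m - int w - 1..int m - 1}"
  unfolding right_combatants_def combatants_def by blast

lemma sum_sgnb_combatants:
  assumes "finite A" "finite D" "A \<inter> D = {}" "inj_on N (A \<union> D)"
  shows "(\<Sum>a\<in>{a\<in>combatants N ty A D. R a}. sgnb (ty a))
       = (\<Sum>j\<in>A \<union> D. of_bool (R (N j)) * combatant_sign N ty A D j)"
proof -
  define S where "S = {j\<in>A \<union> D. (j \<in> A \<longleftrightarrow> ty (N j)) \<and> R (N j)}"
  have "{a\<in>combatants N ty A D. R a} = N ` S"
    unfolding combatants_def S_def using assms(3) by auto
  moreover have "inj_on N S" using assms(4) by (rule inj_on_subset) (auto simp: S_def)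
  ultimately have "(\<Sum>a\<in>{a\<in>combatants N ty A D. R a}. sgnb (ty a)) = (\<Sum>j\<in>S. sgnb (ty (N j)))"
    by (simp add: sum.reindex)
  also have "\<dots> = (\<Sum>j\<in>A \<union> D. if j \<in> S then sgnb (ty (N j)) else 0)"
    unfolding S_def using assms(1,2) by (simp add: sum.inter_filter[symmetric])
  also have "\<dots> = (\<Sum>j\<in>A \<union> D. of_bool (R (N j)) * combatant_sign N ty A D j)"
    using assms(3) by (intro sum.cong) (auto simp: S_def combatant_sign_def sgnb_def)
  finally show ?thesis .
qed

locale segregation =
  fixes n w :: nat and ty :: "nat \<Rightarrow> bool" and P :: "nat \<Rightarrow> nat \<times> nat"
  assumes n_pos: "0 < n"
    and proposals_in_range: "\<And>t. fst (P t) < n \<and> snd (P t) < n"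
begin

abbreviation "oc t \<equiv> occ n w ty P t"

definition satisfied_before :: "nat \<Rightarrow> nat \<Rightarrow> bool" where
  "satisfied_before t a = (\<exists>t'<t. satisfied_at n w ty P t' a)"

abbreviation transcript_bound :: "nat set \<Rightarrow> nat \<Rightarrow> bool" where
  "transcript_bound C t \<equiv>
     (\<Sum>a\<in>{a\<in>C. satisfied_before t a}. sgnb (ty a)) \<le> (\<Sum>a\<in>C. sgnb (ty a))"

lemma satisfied_before_Suc:
  "satisfied_before (Suc t) a \<longleftrightarrow> satisfied_before t a \<or> satisfied_at n w ty P t a"
  unfolding satisfied_before_def using less_Suc_eq by auto

lemma sat_time_less_iff: "sat_time n w ty P a < enat t \<longleftrightarrow> satisfied_before t a"
proof
  assume less: "sat_time n w ty P a < enat t"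
  then have ex: "\<exists>t. satisfied_at n w ty P t a" unfolding sat_time_def by (auto split: if_splits)
  then have "(LEAST t. satisfied_at n w ty P t a) < t" using less unfolding sat_time_def by simp
  then show "satisfied_before t a" unfolding satisfied_before_def using LeastI_ex[OF ex] by blast
next
  assume "satisfied_before t a"
  then obtain t' where "t' < t" "satisfied_at n w ty P t' a" unfolding satisfied_before_def by blast
  then show "sat_time n w ty P a < enat t"
    unfolding sat_time_def using Least_le[of "\<lambda>t. satisfied_at n w ty P t a" t']
    by (auto intro: le_less_trans)
qed

lemma inj_on_occ: "inj_on (oc t) {..<n}"
proof -
  have "inj_on (oc t) {..<n} \<and> oc t ` {..<n} \<subseteq> {..<n}"
  proof (induction t)
    case (Suc t)
    obtain a b where "P t = (a, b)" by fastforce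
    moreover have "a < n" "b < n" using proposals_in_range[of t] calculation by auto
    ultimately show ?case using Suc
      unfolding occ.simps step_def Let_def inj_on_def by (auto split: if_splits)
  qed simp
  then show ?thesis by blast
qed

lemma occ_Suc_eq:
  assumes "\<not> (unhappy n w ty P t (oc t v) \<and> satisfied_at n w ty P t (oc t v))"
  shows "oc (Suc t) v = oc t v"
  using assms unfolding occ.simps step_def Let_def satisfied_at_def unhappy_def
  by (cases "P t") auto

lemma type_occ_Suc_flips:
  assumes "unhappy n w ty P t (oc t v)" "satisfied_at n w ty P t (oc t v)"
  shows "ty (oc (Suc t) v) \<noteq> ty (oc t v)"
  using assms unfolding occ.simps step_def Let_def satisfied_at_def unhappy_def
  by (cases "P t") auto

lemma satisfied_before_if_moved: "oc t v \<noteq> v \<Longrightarrow> satisfied_before t v"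
proof (induction t)
  case (Suc t)
  then show ?case
    using occ_Suc_eq[of t v] satisfied_before_Suc by (cases "oc t v = v") auto
qed simp

lemma unhappy_occ_iff:
  assumes "v < n"
  shows "unhappy n w ty P t (oc t v) \<longleftrightarrow>
    (if lab n w ty P t v then bias n w ty P t v \<le> 0 else bias n w ty P t v \<ge> 0)"
proof -
  have "oc t v' = oc t v \<longleftrightarrow> v' = v" if "v' < n" for v'
    using inj_on_occ[of t] assms that unfolding inj_on_def by blast
  then show ?thesis
    using assms unfolding unhappy_def unhappy_ind_of_def unhappy_node_of_def lab_def bias_def
    by auto
qed

lemma sgnb_lab_ge:
  "sgnb (ty v) - 2 * of_bool (ty v \<and> satisfied_before t v) \<le> sgnb (lab n w ty P t v)"
  using satisfied_before_if_moved[of t v] unfolding lab_def sgnb_def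
  by (cases "oc t v = v") auto

lemma bias_eq_sum_window:
  "bias n w ty P t (nd n s k) = (\<Sum>j\<in>{k - int w..k + int w}. sgnb (lab n w ty P t (nd n s j)))"
proof -
  have "bias n w ty P t (nd n s k) = (\<Sum>j\<in>{- int w..int w}. sgnb (lab n w ty P t (nd n s (k + j))))"
    unfolding bias_def bias_of_def lab_def nd_nd[OF n_pos] ..
  also have "\<dots> = (\<Sum>j\<in>{k - int w..k + int w}. sgnb (lab n w ty P t (nd n s j)))"
    by (rule sum.reindex_bij_witness[where i="\<lambda>j. j - k" and j="\<lambda>j. k + j"]) auto
  finally show ?thesis .
qed

lemma pseudo_transcript_bound:
  assumes "pseudo_transcript n w ty P s m C sg" "partial_sums_nonneg sg"
  obtains t0 where "calm_time n w ty P s m t0"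
    and "\<And>t. t \<le> t0 \<Longrightarrow> transcript_bound C t"
proof -
  obtain t0 cs where calm: "calm_time n w ty P s m t0" and cs: "distinct cs" "set cs = C"
    "sorted_wrt (\<lambda>a b. sat_time n w ty P b \<le> sat_time n w ty P a) cs"
    "mset sg = mset (map (\<lambda>a. sgnb (ty a)) cs)"
    "\<forall>i<length cs. sat_time n w ty P (cs ! i) \<le> enat t0 \<longrightarrow> sg ! i = sgnb (ty (cs ! i))"
    using assms(1) unfolding pseudo_transcript_def by blast
  have "transcript_bound C t" if "t \<le> t0" for t
    using sum_early_le_sum_if_prefix_sums_nonneg[OF cs(1,3,4,5), of "enat t"] assms(2) that
    unfolding partial_sums_nonneg_def cs(2) sat_time_less_iff by simp
  with calm show ?thesis using that by blast
qed

end

locale firewall_incubator = segregation +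
  fixes s m :: nat
  assumes fits_cycle: "m + 2 * w \<le> n"
    and incubator: "x_firewall_incubator n w ty P s m"
begin

abbreviation "N k \<equiv> nd n s k"

definition sign :: "nat \<Rightarrow> int \<Rightarrow> int" where
  "sign t j = sgnb (lab n w ty P t (N j))"

definition o_in_place :: "nat \<Rightarrow> bool" where
  "o_in_place t = (\<forall>k\<in>{0..<int m}. \<not> lab n w ty P t (N k) \<longrightarrow>
     oc t (N k) = N k \<and> \<not> satisfied_before t (N k))"

lemma incubator_long: "2 * (w + 1) \<le> m"
  using incubator unfolding x_firewall_incubator_def by simp

lemma bias_eq_sum_sign: "bias n w ty P t (N k) = (\<Sum>j\<in>{k - int w..k + int w}. sign t j)"
  unfolding sign_def by (rule bias_eq_sum_window)

lemma sign_0: "sign 0 j = sgnb (ty (N j))"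
  unfolding sign_def lab_def by simp

lemma initial_bias_pos: "k \<in> {0..<int m} \<Longrightarrow> bias n w ty P 0 (N k) > 0"
  using incubator unfolding x_firewall_incubator_def
  by (smt (verit) of_int_0_less_iff real_sqrt_ge_zero of_nat_0_le_iff)

lemma sign_of_o_in_place:
  assumes "o_in_place t" "k \<in> {0..<int m}"
  shows "sign 0 k \<le> sign t k"
    and "\<not> ty (N k) \<Longrightarrow> satisfied_before t (N k) \<Longrightarrow> sign t k = sign 0 k + 2"
  using assms unfolding o_in_place_def sign_def lab_def sgnb_def by auto

lemma bias_pos_interior:
  assumes inv: "o_in_place t" and window: "{k - int w..k + int w} \<subseteq> {0..<int m}"
  shows "bias n w ty P t (N k) > 0"
proof -
  have "k \<in> {0..<int m}" using window by (rule subsetD) simp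
  moreover have "(\<Sum>j\<in>{k - int w..k + int w}. sign 0 j) \<le> (\<Sum>j\<in>{k - int w..k + int w}. sign t j)"
    using sign_of_o_in_place(1)[OF inv] window by (intro sum_mono) blast
  ultimately show ?thesis using initial_bias_pos[of k] unfolding bias_eq_sum_sign by linarith
qed

text \<open>A satisfied attacking x (offsets A) costs the window of k at most 2, a satisfied
  defending o (offsets D) gains 2; with the transcript bound and the minimality of the initial
  bias at the end e, this leaves a bias of at least |D| - |A| = 1.\<close>
lemma bias_pos_near_end:
  assumes inv: "o_in_place t"
    and AD: "A \<union> D = {e - int w..e + int w}" "A \<inter> D = {}" "card D = card A + 1"
    and D_sub: "D \<subseteq> {k - int w..k + int w}" "D \<subseteq> {0..<int m}"
    and window_sub: "{k - int w..k + int w} \<subseteq> A \<union> {0..<int m}"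
    and min_end: "bias n w ty P 0 (N e) \<le> bias n w ty P 0 (N k)"
    and bound: "transcript_bound (combatants N ty A D) t"
  shows "bias n w ty P t (N k) > 0"
proof -
  define W where "W = {k - int w..k + int w}"
  define cs where "cs = combatant_sign N ty A D"
  define q where "q j = of_bool (satisfied_before t (N j)) * cs j" for j
  have "finite (A \<union> D)" unfolding AD(1) by simp
  then have fin: "finite A" "finite D" by simp_all
  have inj: "inj_on N (A \<union> D)"
    unfolding AD(1) using n_pos fits_cycle incubator_long by (intro inj_on_nd) auto
  have sign_ge: "sign 0 j - 2 * q j \<le> sign t j" if "j \<in> W" for j
  proof (cases "j \<in> A")
    case True
    then show ?thesis using AD(2) sgnb_lab_ge[of "N j" t]
      by (auto simp: q_def cs_def combatant_sign_def sign_0 sign_def[of t])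
  next
    case False
    then have "j \<in> {0..<int m}" using that window_sub W_def by blast
    then show ?thesis using False sign_of_o_in_place[OF inv, of j]
      by (auto simp: q_def cs_def combatant_sign_def)
  qed
  have "(\<Sum>j\<in>W. q j) = (\<Sum>j\<in>W \<inter> (A \<union> D). q j)"
    by (rule sum.mono_neutral_right) (auto simp: W_def q_def cs_def combatant_sign_def)
  also have "\<dots> \<le> (\<Sum>j\<in>A \<union> D. q j)"
    using fin AD(2) D_sub(1) by (intro sum_mono2) (auto simp: W_def q_def cs_def combatant_sign_def)
  also have "\<dots> \<le> (\<Sum>j\<in>A \<union> D. cs j)"
    using bound sum_sgnb_combatants[OF fin AD(2) inj, of ty "satisfied_before t"]
      sum_sgnb_combatants[OF fin AD(2) inj, of ty "\<lambda>_. True"]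
    unfolding q_def cs_def by simp
  finally have q_le: "(\<Sum>j\<in>W. q j) \<le> (\<Sum>j\<in>A \<union> D. cs j)" .
  have "(\<Sum>j\<in>A \<union> D. sign 0 j - 2 * cs j) = (\<Sum>j\<in>A \<union> D. if j \<in> D then 1 else -1)"
    using AD(2) by (intro sum.cong) (auto simp: sign_0 sgnb_def cs_def combatant_sign_def)
  also have "\<dots> = 1"
  proof -
    have "(A \<union> D) \<inter> D = D" "(A \<union> D) \<inter> - D = A" using AD(2) by blast+
    then show ?thesis using fin AD(3) by (simp add: sum.If_cases)
  qed
  finally have "(\<Sum>j\<in>A \<union> D. sign 0 j) - 2 * (\<Sum>j\<in>A \<union> D. cs j) = 1"
    by (simp add: sum_subtractf sum_distrib_left)
  moreover have "(\<Sum>j\<in>A \<union> D. sign 0 j) \<le> (\<Sum>j\<in>W. sign 0 j)"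
    using min_end unfolding bias_eq_sum_sign AD(1) W_def .
  moreover have "(\<Sum>j\<in>W. sign 0 j) - 2 * (\<Sum>j\<in>W. q j) \<le> (\<Sum>j\<in>W. sign t j)"
    using sum_mono[OF sign_ge] by (simp add: sum_distrib_left sum_subtractf)
  ultimately show ?thesis using q_le unfolding bias_eq_sum_sign W_def by linarith
qed


lemma bias_pos_of_o_in_place:
  assumes inv: "o_in_place t"
    and left: "transcript_bound (left_combatants n w ty s m) t"
    and right: "transcript_bound (right_combatants n w ty s m) t"
    and k: "k \<in> {0..<int m}"
  shows "bias n w ty P t (N k) > 0"
proof -
  have long: "2 * (int w + 1) \<le> int m" using incubator_long by (simp add: zle_int[symmetric])
  consider "k \<le> int w" | "int m - int w - 1 \<le> k" | "int w < k" "k < int m - int w - 1"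
    by linarith
  then show ?thesis
  proof cases
    case 1
    show ?thesis
    proof (rule bias_pos_near_end[OF inv, where e = 0 and A = "{- int w..-1}" and D = "{0..int w}"])
      show "bias n w ty P 0 (N 0) \<le> bias n w ty P 0 (N k)"
        using incubator 1 k unfolding x_firewall_incubator_def by auto
    qed (use left 1 k long in \<open>auto simp: left_combatants_eq\<close>)
  next
    case 2
    show ?thesis
    proof (rule bias_pos_near_end[OF inv, where e = "int m - 1"
          and A = "{int m..int m + int w - 1}" and D = "{int m - int w - 1..int m - 1}"])
      show "bias n w ty P 0 (N (int m - 1)) \<le> bias n w ty P 0 (N k)"
        using incubator 2 k unfolding x_firewall_incubator_def by auto
    qed (use right 2 k long in \<open>auto simp: right_combatants_eq\<close>)
  next
    case 3
    then show ?thesis by (intro bias_pos_interior[OF inv]) auto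
  qed
qed

lemma o_in_place_Suc:
  assumes inv: "o_in_place t" and pos: "\<forall>k\<in>{0..<int m}. bias n w ty P t (N k) > 0"
  shows "o_in_place (Suc t)"
  unfolding o_in_place_def
proof (intro ballI impI)
  fix k assume k: "k \<in> {0..<int m}" and o_Suc: "\<not> lab n w ty P (Suc t) (N k)"
  have v: "N k < n" using n_pos by (rule nd_less)
  have "bias n w ty P t (N k) > 0" using pos k by blast
  then have unhappy: "unhappy n w ty P t (oc t (N k)) \<longleftrightarrow> \<not> lab n w ty P t (N k)"
    using unhappy_occ_iff[OF v] by auto
  show "oc (Suc t) (N k) = N k \<and> \<not> satisfied_before (Suc t) (N k)"
  proof (cases "lab n w ty P t (N k)")
    case True
    then have "oc (Suc t) (N k) = oc t (N k)" using unhappy occ_Suc_eq by blast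
    then show ?thesis using True o_Suc unfolding lab_def by simp
  next
    case False
    then have place: "oc t (N k) = N k" "\<not> satisfied_before t (N k)"
      using inv k unfolding o_in_place_def by auto
    have "\<not> satisfied_at n w ty P t (N k)"
      using type_occ_Suc_flips[of t "N k"] unhappy False o_Suc place(1) unfolding lab_def by auto
    then show ?thesis
      using occ_Suc_eq[of t "N k"] place satisfied_before_Suc by auto
  qed
qed

lemma o_in_place_upto:
  assumes "\<And>t. t \<le> t0 \<Longrightarrow> transcript_bound (left_combatants n w ty s m) t"
    and "\<And>t. t \<le> t0 \<Longrightarrow> transcript_bound (right_combatants n w ty s m) t"
  shows "t \<le> t0 \<Longrightarrow> o_in_place t"
proof (induction t)
  case 0
  then show ?case unfolding o_in_place_def satisfied_before_def by simp
next
  case (Suc t)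
  then show ?case using o_in_place_Suc bias_pos_of_o_in_place assms by simp
qed

lemma all_x_at_calm_time:
  assumes calm: "calm_time n w ty P s m t" and inv: "o_in_place t"
    and pos: "\<forall>k\<in>{0..<int m}. bias n w ty P t (N k) > 0"
  shows "\<forall>k\<in>{0..<int m}. lab n w ty P t (N k)"
proof (intro ballI, rule ccontr)
  fix k assume k: "k \<in> {0..<int m}" and o: "\<not> lab n w ty P t (N k)"
  then have place: "oc t (N k) = N k" "\<not> satisfied_before t (N k)"
    using inv unfolding o_in_place_def by auto
  have "bias n w ty P t (N k) > 0" using pos k by blast
  then have "unhappy n w ty P t (oc t (N k))"
    using unhappy_occ_iff[OF nd_less[OF n_pos]] o by auto
  moreover have "enat t \<le> sat_time n w ty P (N k)"
    using place(2) sat_time_less_iff not_le by blast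
  ultimately have "impatient n w ty P t (oc t (N k))"
    unfolding impatient_def place(1) by simp
  then show False using calm k unfolding calm_time_def by blast
qed

end

theorem proposition3:
  fixes n w s m :: nat and ty :: "nat \<Rightarrow> bool" and P :: "nat \<Rightarrow> nat \<times> nat"
  assumes "s < n"
    and "m + 2 * w \<le> n"
    and "\<forall>t. fst (P t) < n \<and> snd (P t) < n \<and> fst (P t) \<noteq> snd (P t)"
    and "x_firewall_incubator n w ty P s m"
    and "\<exists>sg. pseudo_transcript n w ty P s m (left_combatants n w ty s m) sg \<and> partial_sums_nonneg sg"
    and "\<exists>sg. pseudo_transcript n w ty P s m (right_combatants n w ty s m) sg \<and> partial_sums_nonneg sg"
  shows "\<exists>t. \<forall>k\<in>{0..<int m}. lab n w ty P t (nd n s k)"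
proof -
  interpret firewall_incubator n w ty P s m
    using assms(1-4) by unfold_locales auto
  obtain t1 where calm1: "calm_time n w ty P s m t1"
    and left: "\<And>t. t \<le> t1 \<Longrightarrow> transcript_bound (left_combatants n w ty s m) t"
    using assms(5) pseudo_transcript_bound by metis
  obtain t2 where calm2: "calm_time n w ty P s m t2"
    and right: "\<And>t. t \<le> t2 \<Longrightarrow> transcript_bound (right_combatants n w ty s m) t"
    using assms(6) pseudo_transcript_bound by metis
  define t0 where "t0 = min t1 t2"
  have calm: "calm_time n w ty P s m t0" using calm1 calm2 unfolding t0_def min_def by simp
  have inv: "o_in_place t0" using o_in_place_upto[of t0] left right unfolding t0_def by simp
  have "\<forall>k\<in>{0..<int m}. bias n w ty P t0 (N k) > 0"
    using bias_pos_of_o_in_place[OF inv] left right unfolding t0_def by simp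
  then show ?thesis using all_x_at_calm_time[OF calm inv] by blast
qed

end
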